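(* Suppose that Assumptions (A1) and (A2) hold. Then there is a constant $C>0$ depending only on $\alpha$, $\gamma$, the constants in (A1) and (A2), and $\|V\|_{L^\infty}$ (in particular independent of $\epsilon\in(0,1]$) such that every solution $(u,m)$ of Problem 1 satisfies $$\int_0^1 m^{\alpha+1}\,dx+\int_0^1|u_x|^\gamma(1+m)\,dx+\epsilon\int_0^1\left(u^2+m^2+u_x^2+m_x^2\right)dx\le C.$$ The same bound, with the same constant, holds if $V$ is replaced by $\lambda V$ for any $\lambda\in[0,1]$.
   Context: Let $\mathbb{T}=\mathbb{R}/\mathbb{Z}$ be the one-dimensional torus; functions on $\mathbb{T}$ are identified with $1$-periodic functions on $\mathbb{R}$, and integrals over $\mathbb{T}$ are written $\int_0^1$. Let $H:\mathbb{R}\to\mathbb{R}$ be of class $C^2$, $V:\mathbb{T}\to\mathbb{R}$ continuous, $\alpha>0$, and $0<\epsilon\le 1$. We say $(u,m)$ solves Problem 1 if $u,m\in C^2(\mathbb{T})$, $m>0$ on $\mathbb{T}$, and on $\mathbb{T}$: $$u-u_{xx}+H(u_x)+V(x)=m^\alpha+\epsilon(m-m_{xx}),\qquad m-m_{xx}-(H'(u_x)m)_x=1-\epsilon(u-u_{xx}).$$ Assumptions: (A1) there exist constants $C_1,C_2,C_3>0$ and $\gamma>1$ such that $-C_1+C_2|p|^\gamma\le H(p)\le C_1+C_3|p|^\gamma$ for all $p\in\mathbb{R}$. (A2) There exist constants $\tilde C_1,\tilde C_2,\tilde C_3>0$ such that $-\tilde C_1+\tilde C_2|p|^\gamma\le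 pH'(p)-H(p)\le \tilde C_1+\tilde C_3|p|^\gamma$ for all $p$ (same $\gamma$ as in (A1)). *)

theory Defs
  imports "HOL-Analysis.Analysis"
begin

definition C2_fun :: "(real \<Rightarrow> real) \<Rightarrow> bool" where
  "C2_fun f \<longleftrightarrow>
     (\<forall>x. f differentiable (at x)) \<and>
     (\<forall>x. deriv f differentiable (at x)) \<and>
     continuous_on UNIV (deriv (deriv f))"

text \<open>Functions on the torus R/Z are identified with 1-periodic functions on R.\<close>
definition periodic1 :: "(real \<Rightarrow> real) \<Rightarrow> bool" where
  "periodic1 f \<longleftrightarrow> (\<forall>x. f (x + 1) = f x)"

definition C2_torus :: "(real \<Rightarrow> real) \<Rightarrow> bool" where
  "C2_torus f \<longleftrightarrow> periodic1 f \<and> C2_fun f"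

definition problem1 ::
  "(real \<Rightarrow> real) \<Rightarrow> (real \<Rightarrow> real) \<Rightarrow> real \<Rightarrow> real \<Rightarrow>
   (real \<Rightarrow> real) \<Rightarrow> (real \<Rightarrow> real) \<Rightarrow> bool" where
  "problem1 H V \<alpha> \<epsilon> u m \<longleftrightarrow>
     C2_torus u \<and> C2_torus m \<and> (\<forall>x. m x > 0) \<and>
     (\<forall>x. u x - deriv (deriv u) x + H (deriv u x) + V x
            = m x powr \<alpha> + \<epsilon> * (m x - deriv (deriv m) x)) \<and>
     (\<forall>x. m x - deriv (deriv m) x - deriv (\<lambda>y. deriv H (deriv u y) * m y) x
            = 1 - \<epsilon> * (u x - deriv (deriv u) x))"

end

theory Submission
  imports Defs
begin

text \<open>Test the first equation with \<open>m - 1\<close>, the second with \<open>u\<close>, and subtract: every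
  second-order term then combines into the derivative of a periodic function, so the
  integral of \<open>energy_density\<close> over the torus vanishes. In that density, (A1) and (A2)
  make the Hamiltonian terms dominate \<open>|u_x|^\<gamma> (1 + m)\<close> up to constants, \<open>m^(\<alpha>+1)\<close>
  absorbs the lower-order terms \<open>m^\<alpha>\<close> and \<open>m\<close>, and \<open>|V (m - 1)| \<le> sup |V| (m + 1)\<close>.
  Hence a fixed multiple of the energy is bounded by a constant depending only on the data.\<close>

lemma periodic1_add_of_int:
  assumes "periodic1 f"
  shows "f (x + of_int n) = f x"
proof (induct n arbitrary: x rule: int_induct[where k=0])
  case base
  then show ?case by simp
next
  case (step1 i)
  have "f (x + of_int (i + 1)) = f ((x + of_int i) + 1)" by (simp add: algebra_simps)
  also have "\<dots> = f (x + of_int i)" using assms unfolding periodic1_def by blast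
  finally show ?case using step1 by simp
next
  case (step2 i)
  have "f (x + of_int i) = f ((x + of_int (i - 1)) + 1)" by (simp add: algebra_simps)
  also have "\<dots> = f (x + of_int (i - 1))" using assms unfolding periodic1_def by blast
  finally show ?case using step2 by simp
qed

lemma bdd_above_abs_periodic1:
  assumes "continuous_on UNIV V" "periodic1 V"
  shows "bdd_above (range (\<lambda>x. \<bar>V x\<bar>))"
proof -
  have "compact (V ` {0..1})"
    by (rule compact_continuous_image[OF continuous_on_subset[OF assms(1)]]) auto
  then obtain a where a: "\<forall>y\<in>V ` {0..1}. \<bar>y\<bar> \<le> a"
    by (metis bounded_iff compact_imp_bounded real_norm_def)
  have "\<bar>V x\<bar> \<le> a" for x
  proof -
    have "V x = V (frac x)"
      using periodic1_add_of_int[OF assms(2), of "frac x" "\<lfloor>x\<rfloor>"] by (simp add: frac_def)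
    moreover have "frac x \<in> {0..1}" using frac_lt_1[of x] frac_ge_0[of x] by auto
    ultimately show ?thesis using a by auto
  qed
  then show ?thesis by (intro bdd_aboveI2) auto
qed

lemma periodic1_deriv:
  assumes "periodic1 u" "\<And>x. u differentiable (at x)"
  shows "periodic1 (deriv u)"
  unfolding periodic1_def
proof
  fix x
  have "(u has_real_derivative deriv u (x + 1)) (at (x + 1))"
    using assms(2) DERIV_deriv_iff_real_differentiable by blast
  then have "((\<lambda>y. u (y + 1)) has_real_derivative deriv u (x + 1) * 1) (at x)"
    by (rule DERIV_chain2) (auto intro!: derivative_eq_intros)
  moreover have "(\<lambda>y. u (y + 1)) = u" using assms(1) unfolding periodic1_def by auto
  ultimately show "deriv u (x + 1) = deriv u x" by (simp add: DERIV_imp_deriv)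
qed

lemma has_integral_periodic1_derivative:
  assumes "periodic1 F" "\<And>x. (F has_real_derivative f x) (at x)"
  shows "(f has_integral 0) {0..1}"
proof -
  have "(f has_integral F 1 - F 0) {0..1}"
    by (rule fundamental_theorem_of_calculus)
       (auto simp: has_real_derivative_iff_has_vector_derivative[symmetric]
             intro: has_field_derivative_at_within assms(2))
  moreover have "F 1 = F 0" using assms(1) unfolding periodic1_def by (metis add_0)
  ultimately show ?thesis by simp
qed

lemma C2_fun_has_derivative:
  assumes "C2_fun f"
  shows "(f has_real_derivative deriv f x) (at x)"
    and "(deriv f has_real_derivative deriv (deriv f) x) (at x)"
  using assms unfolding C2_fun_def by (auto simp: DERIV_deriv_iff_real_differentiable)

lemma C2_fun_continuous_on:
  assumes "C2_fun f"
  shows "continuous_on S f" and "continuous_on S (deriv f)"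
  using C2_fun_has_derivative[OF assms]
  by (auto intro!: continuous_at_imp_continuous_on DERIV_isCont)

definition energy_density ::
  "(real \<Rightarrow> real) \<Rightarrow> (real \<Rightarrow> real) \<Rightarrow> real \<Rightarrow> real \<Rightarrow>
   (real \<Rightarrow> real) \<Rightarrow> (real \<Rightarrow> real) \<Rightarrow> real \<Rightarrow> real" where
  "energy_density H W \<alpha> \<epsilon> u m x =
     m x powr \<alpha> * m x - m x powr \<alpha>
     + \<epsilon> * ((u x)\<^sup>2 + (m x)\<^sup>2 + (deriv u x)\<^sup>2 + (deriv m x)\<^sup>2) - \<epsilon> * m x
     + m x * (deriv u x * deriv H (deriv u x) - H (deriv u x)) + H (deriv u x)
     - W x * (m x - 1)"

lemma problem1_energy_identity:
  assumes P: "problem1 H W \<alpha> \<epsilon> u m" and HC: "C2_fun H"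
  shows "(energy_density H W \<alpha> \<epsilon> u m has_integral 0) {0..1}"
proof -
  define u1 where "u1 = deriv u"
  define u2 where "u2 = deriv u1"
  define m1 where "m1 = deriv m"
  define m2 where "m2 = deriv m1"
  define g where "g = (\<lambda>y. deriv H (u1 y) * m y)"
  have Cu: "C2_fun u" and Cm: "C2_fun m" and pu: "periodic1 u" and pm: "periodic1 m"
    using P unfolding problem1_def C2_torus_def by auto
  have du: "(u has_real_derivative u1 x) (at x)" "(u1 has_real_derivative u2 x) (at x)"
    and dm: "(m has_real_derivative m1 x) (at x)" "(m1 has_real_derivative m2 x) (at x)" for x
    using C2_fun_has_derivative[OF Cu] C2_fun_has_derivative[OF Cm]
    unfolding u1_def u2_def m1_def m2_def by auto
  have dg: "(g has_real_derivative deriv g x) (at x)" for x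
  proof -
    have "((\<lambda>y. deriv H (u1 y)) has_real_derivative deriv (deriv H) (u1 x) * u2 x) (at x)"
      by (rule DERIV_chain2[OF C2_fun_has_derivative(2)[OF HC] du(2)])
    from DERIV_mult[OF this dm(1)] show ?thesis
      unfolding g_def by (auto simp: DERIV_deriv_iff_real_differentiable real_differentiable_def)
  qed
  have "u x - u2 x + H (u1 x) + W x = m x powr \<alpha> + \<epsilon> * (m x - m2 x)"
    and "m x - m2 x - deriv g x = 1 - \<epsilon> * (u x - u2 x)" for x
    using P unfolding problem1_def u1_def u2_def m1_def m2_def g_def by auto
  then have mpow: "m x powr \<alpha> = u x - u2 x + H (u1 x) + W x - \<epsilon> * (m x - m2 x)"
    and dg_eq: "deriv g x = m x - m2 x - 1 + \<epsilon> * (u x - u2 x)" for x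
    by (smt (verit))+
  define F where "F = (\<lambda>y. m1 y * u y - u1 y * m y + u1 y + g y * u y
                            + \<epsilon> * (m1 y * m y) - \<epsilon> * m1 y + \<epsilon> * (u1 y * u y))"
  show ?thesis
  proof (rule has_integral_periodic1_derivative)
    have "periodic1 u1" "periodic1 m1"
      unfolding u1_def m1_def using Cu Cm pu pm
      by (auto intro!: periodic1_deriv simp: C2_fun_def)
    then show "periodic1 F"
      using pu pm unfolding periodic1_def F_def g_def by simp
  next
    fix x
    have "(F has_real_derivative m2 x * u x + m1 x * u1 x - (u2 x * m x + u1 x * m1 x) + u2 x
           + (deriv g x * u x + g x * u1 x) + \<epsilon> * (m2 x * m x + m1 x * m1 x) - \<epsilon> * m2 x
           + \<epsilon> * (u2 x * u x + u1 x * u1 x)) (at x)"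
      unfolding F_def by (auto intro!: derivative_eq_intros du dm dg simp: algebra_simps)
    then show "(F has_real_derivative energy_density H W \<alpha> \<epsilon> u m x) (at x)"
      unfolding energy_density_def u1_def[symmetric] m1_def[symmetric]
      by (simp only: mpow dg_eq) (simp add: g_def algebra_simps power2_eq_square)
  qed
qed

lemma powr_plus_linear_le:
  fixes m \<alpha> K R :: real
  assumes "\<alpha> > 0" "K > 0" "m > 0" "R = max 4 ((4 * K) powr (1 / \<alpha>))"
  shows "m powr \<alpha> + K * m \<le> m powr \<alpha> * m / 2 + (R powr \<alpha> + K * R)"
proof (cases "m \<le> R")
  case True
  have "m powr \<alpha> \<le> R powr \<alpha>" using True assms by (intro powr_mono2) auto
  moreover have "K * m \<le> K * R" using True assms by auto
  moreover have "0 \<le> m powr \<alpha> * m" using assms by simp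
  ultimately show ?thesis by linarith
next
  case False
  have R4: "R \<ge> 4" and RK: "R \<ge> (4 * K) powr (1 / \<alpha>)" using assms by auto
  have "4 * K = ((4 * K) powr (1 / \<alpha>)) powr \<alpha>"
    using assms by (simp add: powr_powr)
  also have "\<dots> \<le> R powr \<alpha>" using RK assms by (intro powr_mono2) auto
  also have "\<dots> \<le> m powr \<alpha>" using False assms R4 by (intro powr_mono2) auto
  finally have "K * m \<le> (m powr \<alpha> / 4) * m" using assms by (intro mult_right_mono) auto
  moreover have "m powr \<alpha> \<le> (m powr \<alpha> * m) / 4" using False R4 assms
    by (simp add: field_simps)
  moreover have "0 \<le> R powr \<alpha> + K * R" using assms R4 by auto
  ultimately show ?thesis by (simp add: field_simps)
qed

text \<open>Here \<open>p\<close>, \<open>q\<close>, \<open>h\<close>, \<open>Hq\<close>, \<open>a\<close>, \<open>w\<close> and \<open>S\<close> stand for \<open>m^\<alpha>\<close>, \<open>u_x\<close>, \<open>H'(u_x)\<close>,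
  \<open>H(u_x)\<close>, \<open>|u_x|^\<gamma>\<close>, \<open>W\<close> and \<open>u^2+m^2+u_x^2+m_x^2\<close>, so the right-hand side is
  \<open>energy_density\<close>.\<close>

lemma energy_integrand_lower_bound:
  fixes m a S \<epsilon> q h Hq w p C1 C2 D1 D2 B K R k :: real
  assumes "m > 0" "a \<ge> 0" "S \<ge> 0" "0 < \<epsilon>" "\<epsilon> \<le> 1" "p \<ge> 0"
    and "0 \<le> k" "k \<le> 1/2" "k \<le> C2" "k \<le> D2"
    and H_lower: "-C1 + C2 * a \<le> Hq" and L_lower: "-D1 + D2 * a \<le> q * h - Hq"
    and "\<bar>w\<bar> \<le> B"
    and "1 + D1 + B \<le> K" and absorb: "p + K * m \<le> p * m / 2 + R"
  shows "k * (p * m + a * (1 + m) + \<epsilon> * S) - (R + C1 + B)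
         \<le> p * m - p + \<epsilon> * S - \<epsilon> * m + m * (q * h - Hq) + Hq - w * (m - 1)"
proof -
  have "m * (-D1 + D2 * a) \<le> m * (q * h - Hq)" using L_lower assms by (intro mult_left_mono) auto
  moreover have "\<bar>w * (m - 1)\<bar> \<le> B * (m + 1)"
    using assms by (simp add: abs_mult) (intro mult_mono, auto)
  moreover have "\<epsilon> * m \<le> m" using assms by simp
  moreover have "(1 + D1 + B) * m \<le> K * m" using assms by simp
  moreover have "k * (p * m) \<le> p * m / 2"
    using mult_right_mono[of k "1/2" "p * m"] assms by simp
  moreover have "k * a \<le> C2 * a" "k * (m * a) \<le> D2 * (m * a)"
    using assms by (auto intro!: mult_right_mono)
  moreover have "k * (\<epsilon> * S) \<le> \<epsilon> * S" using assms by (intro mult_left_le_one_le) auto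
  ultimately show ?thesis using absorb H_lower by (simp add: algebra_simps abs_le_iff)
qed

definition energy_bound :: "real \<Rightarrow> real \<Rightarrow> real \<Rightarrow> real \<Rightarrow> real \<Rightarrow> real \<Rightarrow> real" where
  "energy_bound \<alpha> C1 C2 D1 D2 B =
     (let K = 1 + D1 + B; R = max 4 ((4 * K) powr (1 / \<alpha>))
      in (R powr \<alpha> + K * R + C1 + B) / min (1/2) (min C2 D2))"

lemma problem1_energy_bound:
  fixes H W u m :: "real \<Rightarrow> real"
  assumes "\<alpha> > 0" "\<gamma> > 0" "C2 > 0" "D2 > 0" "D1 \<ge> 0"
    and HC: "C2_fun H"
    and H_lower: "\<And>p. - C1 + C2 * \<bar>p\<bar> powr \<gamma> \<le> H p"
    and L_lower: "\<And>p. - D1 + D2 * \<bar>p\<bar> powr \<gamma> \<le> p * deriv H p - H p"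
    and W_bound: "\<And>x. \<bar>W x\<bar> \<le> B"
    and "0 < \<epsilon>" "\<epsilon> \<le> 1"
    and P: "problem1 H W \<alpha> \<epsilon> u m"
  shows "integral {0..1} (\<lambda>x. m x powr (\<alpha> + 1))
         + integral {0..1} (\<lambda>x. \<bar>deriv u x\<bar> powr \<gamma> * (1 + m x))
         + \<epsilon> * integral {0..1} (\<lambda>x. (u x)\<^sup>2 + (m x)\<^sup>2 + (deriv u x)\<^sup>2 + (deriv m x)\<^sup>2)
         \<le> energy_bound \<alpha> C1 C2 D1 D2 B"
    (is "integral _ ?f1 + integral _ ?f2 + \<epsilon> * integral _ ?f3 \<le> _")
proof -
  define K where "K = 1 + D1 + B"
  define R where "R = max 4 ((4 * K) powr (1 / \<alpha>))"
  define k where "k = min (1/2) (min C2 D2)"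
  define E where "E = integral {0..1} ?f1 + integral {0..1} ?f2 + \<epsilon> * integral {0..1} ?f3"
  have "B \<ge> 0" using W_bound[of 0] by linarith
  then have "K > 0" "k > 0" using assms unfolding K_def k_def by auto
  have Cu: "C2_fun u" and Cm: "C2_fun m" and m_pos: "\<And>x. m x > 0"
    using P unfolding problem1_def C2_torus_def by auto
  note cont = C2_fun_continuous_on[OF Cu] C2_fun_continuous_on[OF Cm]
  have "?f1 integrable_on {0..1}" "?f2 integrable_on {0..1}" "?f3 integrable_on {0..1}"
    using m_pos \<open>\<gamma> > 0\<close>
    by (auto intro!: integrable_continuous_interval continuous_intros continuous_on_powr' cont
             simp: less_imp_neq[symmetric] less_imp_le)
  then have "((\<lambda>x. k * (?f1 x + ?f2 x + \<epsilon> * ?f3 x) - (R powr \<alpha> + K * R + C1 + B))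
              has_integral k * E - (R powr \<alpha> + K * R + C1 + B)) {0..1}"
    unfolding E_def
    using has_integral_const_real[of "R powr \<alpha> + K * R + C1 + B" 0 1]
    by (auto intro!: has_integral_diff has_integral_mult_right has_integral_add integrable_integral)
  moreover have "k * (?f1 x + ?f2 x + \<epsilon> * ?f3 x) - (R powr \<alpha> + K * R + C1 + B)
      \<le> energy_density H W \<alpha> \<epsilon> u m x" for x
  proof -
    have "k * (m x powr \<alpha> * m x + ?f2 x + \<epsilon> * ?f3 x) - (R powr \<alpha> + K * R + C1 + B)
        \<le> energy_density H W \<alpha> \<epsilon> u m x"
      unfolding energy_density_def
      by (rule energy_integrand_lower_bound[OF m_pos _ _ \<open>0 < \<epsilon>\<close> \<open>\<epsilon> \<le> 1\<close> _ _ _ _ _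
            H_lower L_lower W_bound K_def[symmetric, THEN eq_refl]
            powr_plus_linear_le[OF \<open>\<alpha> > 0\<close> \<open>K > 0\<close> m_pos R_def]])
         (use assms in \<open>simp_all add: k_def\<close>)
    then show ?thesis using m_pos[of x] by (simp add: powr_add)
  qed
  ultimately have "k * E - (R powr \<alpha> + K * R + C1 + B) \<le> 0"
    by (rule has_integral_le[OF _ problem1_energy_identity[OF P HC]])
  then show ?thesis
    using \<open>k > 0\<close> unfolding E_def[symmetric] energy_bound_def K_def[symmetric] R_def[symmetric]
      k_def[symmetric] Let_def by (simp add: field_simps)
qed

theorem mainTheorem3:
  fixes \<alpha> \<gamma> C1 C2 C3 D1 D2 D3 M :: real
  assumes "\<alpha> > 0" and "\<gamma> > 1"
    and "C1 > 0" and "C2 > 0" and "C3 > 0"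
    and "D1 > 0" and "D2 > 0" and "D3 > 0"
  shows "\<exists>C > 0. \<forall>H V. C2_fun H \<and>
            (\<forall>p. - C1 + C2 * \<bar>p\<bar> powr \<gamma> \<le> H p \<and> H p \<le> C1 + C3 * \<bar>p\<bar> powr \<gamma>) \<and>
            (\<forall>p. - D1 + D2 * \<bar>p\<bar> powr \<gamma> \<le> p * deriv H p - H p \<and>
                 p * deriv H p - H p \<le> D1 + D3 * \<bar>p\<bar> powr \<gamma>) \<and>
            continuous_on UNIV V \<and> periodic1 V \<and> (SUP x. \<bar>V x\<bar>) = M \<longrightarrow>
          (\<forall>\<epsilon> lam u m. 0 < \<epsilon> \<and> \<epsilon> \<le> 1 \<and> 0 \<le> lam \<and> lam \<le> 1 \<and>
              problem1 H (\<lambda>x. lam * V x) \<alpha> \<epsilon> u m \<longrightarrow>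
              integral {0..1} (\<lambda>x. m x powr (\<alpha> + 1))
              + integral {0..1} (\<lambda>x. \<bar>deriv u x\<bar> powr \<gamma> * (1 + m x))
              + \<epsilon> * integral {0..1} (\<lambda>x. (u x)\<^sup>2 + (m x)\<^sup>2 + (deriv u x)\<^sup>2 + (deriv m x)\<^sup>2)
              \<le> C)"
proof -
  define C where "C = max 1 (energy_bound \<alpha> C1 C2 D1 D2 \<bar>M\<bar>)"
  show ?thesis
  proof (intro exI[of _ C] conjI allI impI)
    show "C > 0" unfolding C_def by simp
  next
    fix H V u m :: "real \<Rightarrow> real" and \<epsilon> lam :: real
    assume H: "C2_fun H \<and>
            (\<forall>p. - C1 + C2 * \<bar>p\<bar> powr \<gamma> \<le> H p \<and> H p \<le> C1 + C3 * \<bar>p\<bar> powr \<gamma>) \<and>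
            (\<forall>p. - D1 + D2 * \<bar>p\<bar> powr \<gamma> \<le> p * deriv H p - H p \<and>
                 p * deriv H p - H p \<le> D1 + D3 * \<bar>p\<bar> powr \<gamma>) \<and>
            continuous_on UNIV V \<and> periodic1 V \<and> (SUP x. \<bar>V x\<bar>) = M"
      and sol: "0 < \<epsilon> \<and> \<epsilon> \<le> 1 \<and> 0 \<le> lam \<and> lam \<le> 1 \<and>
              problem1 H (\<lambda>x. lam * V x) \<alpha> \<epsilon> u m"
    have W_bound: "\<bar>lam * V x\<bar> \<le> \<bar>M\<bar>" for x
    proof -
      have "\<bar>V x\<bar> \<le> M"
        using H cSUP_upper[OF UNIV_I bdd_above_abs_periodic1, of V x] by auto
      then show ?thesis using sol mult_left_le_one_le[of "\<bar>V x\<bar>" "\<bar>lam\<bar>"] by (auto simp: abs_mult)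
    qed
    have "integral {0..1} (\<lambda>x. m x powr (\<alpha> + 1))
              + integral {0..1} (\<lambda>x. \<bar>deriv u x\<bar> powr \<gamma> * (1 + m x))
              + \<epsilon> * integral {0..1} (\<lambda>x. (u x)\<^sup>2 + (m x)\<^sup>2 + (deriv u x)\<^sup>2 + (deriv m x)\<^sup>2)
              \<le> energy_bound \<alpha> C1 C2 D1 D2 \<bar>M\<bar>"
      using H sol assms
      by (intro problem1_energy_bound[where W = "\<lambda>x. lam * V x"] W_bound) auto
    then show "integral {0..1} (\<lambda>x. m x powr (\<alpha> + 1))
              + integral {0..1} (\<lambda>x. \<bar>deriv u x\<bar> powr \<gamma> * (1 + m x))
              + \<epsilon> * integral {0..1} (\<lambda>x. (u x)\<^sup>2 + (m x)\<^sup>2 + (deriv u x)\<^sup>2 + (deriv m x)\<^sup>2)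
              \<le> C"
      unfolding C_def by linarith
  qed
qed

end
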